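(* Let $f:(0,\infty)\to[1,\infty)$ be nondecreasing and ${\bf C}_0:(0,\infty)\to(0,\infty)$ be monotonically increasing. For an integer $p\ge2$ and $\xi>0$ define $$ {\bf C}(p,\xi)=\frac{{\bf C}_0(\xi)}{2\left[1-(1-p^{-f(\xi)})^{e^{\xi}}\right](1-p^{-f(\xi)})^{e^{\xi}}},\qquad {\bf C}(p)=\min_{\xi>0}{\bf C}(p,\xi), $$ and assume that for all sufficiently large $p$ there is $\xi_0=\xi_0(p)>0$ solving $\xi_0=\log\left[-\frac{\log 2}{\log(1-p^{-f(\xi_0)})}\right]$. Then: (1) if $\lim_{\xi\to\infty}\frac{f(\xi)\log{\bf C}_0(\xi)}{\xi}=0$, then ${\bf C}(p)$ is subexponential or polynomial in $\log p$, i.e. $\lim_{p\to\infty}\frac{\log{\bf C}(p)}{\log p}=0$; (2) in particular, if ${\bf C}_0(\xi)$ is polynomially bounded in $\xi$ and $f(\xi)$ scales sublinearly (i.e. $f(\xi)\le K\xi^{\beta}$ for some constants $K>0$ and $0\le\beta<1$), then ${\bf C}(p)$ is bounded by a polynomial in $\log p$.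
   Context: All logarithms are natural. "${\bf C}_0$ polynomially bounded" means ${\bf C}_0(\xi)\le K'\xi^{a}$ for some constants $K',a>0$ and all large $\xi$. *)

theory Defs
  imports "HOL-Analysis.Analysis"
begin

definition Cpx :: "(real \<Rightarrow> real) \<Rightarrow> (real \<Rightarrow> real) \<Rightarrow> nat \<Rightarrow> real \<Rightarrow> real" where
  "Cpx f C0 p \<xi> =
     C0 \<xi> / (2 * (1 - (1 - real p powr (- f \<xi>)) powr exp \<xi>)
              * (1 - real p powr (- f \<xi>)) powr exp \<xi>)"

text \<open>C(p) = min over xi > 0 of C(p,xi), rendered as the infimum.\<close>
definition Cp :: "(real \<Rightarrow> real) \<Rightarrow> (real \<Rightarrow> real) \<Rightarrow> nat \<Rightarrow> real" where
  "Cp f C0 p = (INF \<xi>\<in>{0<..}. Cpx f C0 p \<xi>)"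

end

theory Submission
  imports Defs "HOL-Real_Asymp.Real_Asymp"
begin

text \<open>Write \<open>q = p powr - f \<xi>\<close> and \<open>u = (1 - q) powr exp \<xi>\<close>, so that
  \<open>Cpx f C0 p \<xi> = C0 \<xi> / (2 (1 - u) u)\<close>. As \<open>2 (1 - u) u \<le> 1/2\<close>, always
  \<open>Cpx f C0 p \<xi> \<ge> 2 C0 \<xi>\<close>, with equality at the balancing point \<open>\<xi>0\<close>, where \<open>u = 1/2\<close>.
  The bounds \<open>q \<le> - ln (1 - q) \<le> 2 q\<close> give \<open>ln p + O(1) \<le> \<xi>0 \<le> f \<xi>0 * ln p\<close>.
  Hence \<open>\<xi>0 \<rightarrow> \<infinity>\<close> and \<open>ln (Cp f C0 p) \<le> ln 2 + ln (C0 \<xi>0)\<close>, where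
  \<open>ln (C0 \<xi>0) / ln p \<le> f \<xi>0 * ln (C0 \<xi>0) / \<xi>0\<close>; in the polynomial case
  \<open>\<xi>0 powr (1 - \<beta>) \<le> K ln p\<close> turns \<open>C0 \<xi>0 \<le> K' \<xi>0 powr a\<close> into a power of \<open>ln p\<close>.
  From below, \<open>Cp f C0 p \<ge> 2 inf C0\<close>, a constant.\<close>

lemma Cpx_ge:
  assumes "1 < real p" "0 < f \<xi>" "0 \<le> C0 \<xi>"
  shows "2 * C0 \<xi> \<le> Cpx f C0 p \<xi>"
proof -
  define u where "u = (1 - real p powr (- f \<xi>)) powr exp \<xi>"
  have "0 < real p powr (- f \<xi>)" "real p powr (- f \<xi>) < 1"
    using assms by (auto intro: powr_less_one)
  then have u: "0 < u" "u < 1" by (simp_all add: u_def powr01_less_one)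
  have "2 * (1 - u) * u \<le> 1/2"
    using sum_squares_ge_zero[of "2*u-1" 0] by (simp add: algebra_simps power2_eq_square)
  then have "C0 \<xi> / (1/2) \<le> C0 \<xi> / (2 * (1 - u) * u)"
    using u assms(3) by (intro divide_left_mono) auto
  then show ?thesis by (simp add: Cpx_def u_def)
qed

lemma Cp_ge:
  assumes "1 < real p" and "\<forall>\<xi>>0. 0 < f \<xi>" and "\<forall>\<xi>>0. c \<le> C0 \<xi>" and "0 \<le> c"
  shows "2 * c \<le> Cp f C0 p"
  unfolding Cp_def
proof (rule cINF_greatest)
  fix \<xi> :: real assume "\<xi> \<in> {0<..}"
  with assms have "2 * c \<le> 2 * C0 \<xi>" "2 * C0 \<xi> \<le> Cpx f C0 p \<xi>"
    by (auto intro!: Cpx_ge)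
  then show "2 * c \<le> Cpx f C0 p \<xi>" by linarith
qed auto

lemma Cp_le_Cpx:
  assumes "1 < real p" and "\<forall>\<xi>>0. 0 < f \<xi>" and "\<forall>\<xi>>0. 0 \<le> C0 \<xi>" and "0 < \<xi>"
  shows "Cp f C0 p \<le> Cpx f C0 p \<xi>"
  unfolding Cp_def
proof (rule cINF_lower)
  show "bdd_below (Cpx f C0 p ` {0<..})"
    using assms Cpx_ge[of p f _ C0] by (intro bdd_belowI[of _ 0]) force
qed (use assms in auto)

lemma balancing_point:
  fixes q \<xi> :: real
  assumes q: "0 < q" "q < 1" and \<xi>: "\<xi> = ln (- ln 2 / ln (1 - q))"
  shows balancing_point_powr: "(1 - q) powr exp \<xi> = 1/2"
    and balancing_point_le: "\<xi> \<le> - ln q"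
    and balancing_point_ge: "q \<le> 1/2 \<Longrightarrow> ln (ln 2 / (2 * q)) \<le> \<xi>"
proof -
  have lq: "- ln (1 - q) > 0" using q by simp
  have exp_\<xi>: "exp \<xi> = ln 2 / - ln (1 - q)" using lq \<xi> by (simp add: divide_pos_neg)
  show "(1 - q) powr exp \<xi> = 1/2"
    using q lq by (simp add: powr_def exp_\<xi> exp_minus)
  have "q \<le> - ln (1 - q)" using ln_le_minus_one[of "1 - q"] q by simp
  then have "exp \<xi> \<le> ln 2 / q"
    unfolding exp_\<xi> using q lq mult_neg_pos[of "ln (1 - q)" q] by (intro divide_left_mono) auto
  also have "\<dots> < 1 / q" using q ln_2_less_1 by (simp add: divide_strict_right_mono)
  finally have "exp \<xi> < exp (- ln q)" using q by (simp add: exp_minus inverse_eq_divide)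
  then show "\<xi> \<le> - ln q" by simp
  assume "q \<le> 1/2"
  have "- ln (1 - q) = ln (1 / (1 - q))" using q by (simp add: ln_div)
  also have "\<dots> \<le> 1 / (1 - q) - 1" using q by (intro ln_le_minus_one) simp
  also have "\<dots> \<le> 2 * q" using q \<open>q \<le> 1/2\<close> by (simp add: field_simps)
  finally have "ln 2 / (2 * q) \<le> exp \<xi>"
    unfolding exp_\<xi> using q lq mult_pos_neg[of q "ln (1 - q)"] by (intro divide_left_mono) auto
  then show "ln (ln 2 / (2 * q)) \<le> \<xi>"
    using q by (subst ln_exp[of \<xi>, symmetric]) (rule ln_mono, auto)
qed

lemma two_mul_one_minus_powr_ge:
  fixes q t :: real
  assumes q: "0 < q" "q \<le> 1/6" and t: "1 \<le> t" "t \<le> 3"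
  shows "q \<le> 2 * (1 - (1 - q) powr t) * (1 - q) powr t"
proof -
  define u where "u = (1 - q) powr t"
  have "(1 - q) powr 3 \<le> u" unfolding u_def using q t by (intro powr_mono') auto
  then have "(1 - q) ^ 3 \<le> u" using q by (simp add: powr_realpow)
  moreover have "1 + real 3 * (- q) \<le> (1 + (- q)) ^ 3"
    using q by (intro Bernoulli_inequality) auto
  ultimately have "1/2 \<le> u" using q by simp
  moreover have "u \<le> (1 - q) powr 1" unfolding u_def using q t by (intro powr_mono') auto
  ultimately have "q * 1 \<le> (1 - u) * (2 * u)" using q by (intro mult_mono) auto
  then show ?thesis by (simp add: u_def algebra_simps)
qed

lemma Cpx_le_small:
  assumes p: "6 \<le> real p" and f: "1 \<le> f \<xi>" and \<xi>: "0 \<le> \<xi>" "\<xi> \<le> 1" and C0: "0 \<le> C0 \<xi>"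
  shows "Cpx f C0 p \<xi> \<le> C0 \<xi> * real p powr f \<xi>"
proof -
  define q where "q = real p powr (- f \<xi>)"
  have "q \<le> real p powr (- 1)" unfolding q_def using p f by (intro powr_mono) auto
  also have "\<dots> \<le> 1/6" using p by (simp add: powr_minus_divide)
  finally have q: "0 < q" "q \<le> 1/6" using p by (auto simp: q_def)
  have "exp \<xi> \<le> exp 1" using \<open>\<xi> \<le> 1\<close> by simp
  then have "exp \<xi> \<le> 3" using exp_le by linarith
  then have "q \<le> 2 * (1 - (1 - q) powr exp \<xi>) * (1 - q) powr exp \<xi>"
    using q \<xi> by (intro two_mul_one_minus_powr_ge) auto
  then have "Cpx f C0 p \<xi> \<le> C0 \<xi> / q"
    unfolding Cpx_def q_def[symmetric] using q C0 by (intro divide_left_mono) auto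
  also have "\<dots> = C0 \<xi> * real p powr f \<xi>" by (simp add: q_def powr_minus_divide)
  finally show ?thesis .
qed

lemma Cp_eq_0_if_INF_eq_0:
  assumes p: "6 \<le> real p" and f_ge1: "\<forall>\<xi>>0. 1 \<le> f \<xi>" and f_mono: "mono_on {0<..} f"
    and C0_nonneg: "\<forall>\<xi>>0. 0 \<le> C0 \<xi>" and C0_mono: "mono_on {0<..} C0"
    and INF_0: "(INF \<xi>\<in>{0<..}. C0 \<xi>) = 0"
  shows "Cp f C0 p = 0"
proof (rule antisym)
  have f_pos: "\<forall>\<xi>>0. 0 < f \<xi>" using f_ge1 by fastforce
  show "0 \<le> Cp f C0 p" using Cp_ge[of p f 0 C0] p f_pos C0_nonneg by simp
  show "Cp f C0 p \<le> 0"
  proof (rule field_le_epsilon)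
    fix \<epsilon> :: real assume "0 < \<epsilon>"
    define M where "M = real p powr f 1"
    have M: "0 < M" using p by (simp add: M_def)
    have "bdd_below (C0 ` {0<..})" using C0_nonneg by (intro bdd_belowI[of _ 0]) auto
    moreover have "(INF \<xi>\<in>{0<..}. C0 \<xi>) < \<epsilon> / M" using INF_0 \<open>0 < \<epsilon>\<close> M by simp
    ultimately obtain \<xi> where \<xi>: "0 < \<xi>" and "C0 \<xi> < \<epsilon> / M"
      by (auto simp: cINF_less_iff)
    define \<eta> where "\<eta> = min \<xi> 1"
    have \<eta>: "0 < \<eta>" "\<eta> \<le> 1" "\<eta> \<le> \<xi>" using \<xi> by (auto simp: \<eta>_def)
    have "Cp f C0 p \<le> Cpx f C0 p \<eta>"
      using p f_pos C0_nonneg \<eta> by (intro Cp_le_Cpx) auto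
    also have "\<dots> \<le> C0 \<eta> * real p powr f \<eta>"
      using p f_ge1 C0_nonneg \<eta> by (intro Cpx_le_small) auto
    also have "\<dots> \<le> C0 \<xi> * M" unfolding M_def
      using p f_ge1 C0_nonneg \<eta> \<xi> mono_onD[OF C0_mono, of \<eta> \<xi>] mono_onD[OF f_mono, of \<eta> 1]
      by (intro mult_mono powr_mono) auto
    also have "\<dots> < \<epsilon>" using \<open>C0 \<xi> < \<epsilon> / M\<close> M by (simp add: field_simps)
    finally show "Cp f C0 p \<le> 0 + \<epsilon>" by simp
  qed
qed

text \<open>If \<open>inf C0 = 0\<close> then \<open>Cp f C0 p = 0\<close>, and the inequality holds because \<open>ln 0 = 0\<close>.\<close>
lemma ln_Cp_ge:
  assumes p: "6 \<le> real p" and f_ge1: "\<forall>\<xi>>0. 1 \<le> f \<xi>" and f_mono: "mono_on {0<..} f"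
    and C0_nonneg: "\<forall>\<xi>>0. 0 \<le> C0 \<xi>" and C0_mono: "mono_on {0<..} C0"
  shows "ln (2 * (INF \<xi>\<in>{0<..}. C0 \<xi>)) \<le> ln (Cp f C0 p)"
proof (cases "(INF \<xi>\<in>{0<..}. C0 \<xi>) = 0")
  case True
  then show ?thesis using Cp_eq_0_if_INF_eq_0[OF assms] by simp
next
  case False
  define c where "c = (INF \<xi>\<in>{0<..}. C0 \<xi>)"
  have bdd: "bdd_below (C0 ` {0<..})" using C0_nonneg by (intro bdd_belowI[of _ 0]) auto
  have "0 \<le> c" unfolding c_def using C0_nonneg by (intro cINF_greatest) auto
  with False have "0 < c" by (simp add: c_def)
  moreover have "2 * c \<le> Cp f C0 p"
    using p f_ge1 \<open>0 \<le> c\<close> cINF_lower[OF bdd] by (intro Cp_ge) (auto simp: c_def)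
  ultimately show ?thesis unfolding c_def[symmetric] by simp
qed

lemma balancing_scale:
  assumes f_ge1: "\<forall>\<xi>>0. 1 \<le> f \<xi>" and C0_nonneg: "\<forall>\<xi>>0. 0 \<le> C0 \<xi>"
    and xi0: "\<forall>\<^sub>F p in sequentially.
                \<exists>\<xi>0>0. \<xi>0 = ln (- ln 2 / ln (1 - real p powr (- f \<xi>0)))"
  obtains X :: "nat \<Rightarrow> real" where "filterlim X at_top sequentially"
    and "\<forall>\<^sub>F p in sequentially.
           0 < X p \<and> X p \<le> f (X p) * ln (real p) \<and> Cp f C0 p \<le> 2 * C0 (X p)"
proof -
  define X where
    "X p = (SOME \<xi>. 0 < \<xi> \<and> \<xi> = ln (- ln 2 / ln (1 - real p powr (- f \<xi>))))" for p
  have "\<forall>\<^sub>F p in sequentially.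
          0 < X p \<and> X p = ln (- ln 2 / ln (1 - real p powr (- f (X p))))"
    using xi0 unfolding X_def by (rule eventually_mono) (rule someI_ex, blast)
  then have X: "\<forall>\<^sub>F p in sequentially. 0 < X p \<and> X p \<le> f (X p) * ln (real p)
       \<and> Cp f C0 p \<le> 2 * C0 (X p) \<and> ln (ln 2 * real p / 2) \<le> X p"
    using eventually_ge_at_top[of "2::nat"]
  proof eventually_elim
    case (elim p)
    define q where "q = real p powr (- f (X p))"
    have p: "2 \<le> real p" and X0: "0 < X p" using elim by auto
    have f_pos: "\<forall>\<xi>>0. 0 < f \<xi>" using f_ge1 by fastforce
    have "q \<le> real p powr (- 1)" unfolding q_def using p f_ge1 X0 by (intro powr_mono) auto
    then have q: "0 < q" "q < 1" "q \<le> 1 / real p" "q \<le> 1/2"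
      using p by (auto simp: q_def powr_minus_divide field_simps)
    have bal: "X p = ln (- ln 2 / ln (1 - q))" using elim by (simp add: q_def)
    have "Cp f C0 p \<le> Cpx f C0 p (X p)"
      using p f_pos C0_nonneg X0 by (intro Cp_le_Cpx) auto
    also have "\<dots> = 2 * C0 (X p)"
      unfolding Cpx_def q_def[symmetric] balancing_point_powr[OF q(1,2) bal] using q by simp
    finally have "Cp f C0 p \<le> 2 * C0 (X p)" .
    moreover have "X p \<le> f (X p) * ln (real p)"
      using balancing_point_le[OF q(1,2) bal] q p by (simp add: q_def ln_powr)
    moreover have "ln (ln 2 * real p / 2) \<le> ln (ln 2 / (2 * q))"
      using q p by (intro ln_mono) (auto simp: field_simps)
    ultimately show ?case using X0 balancing_point_ge[OF q(1,2) bal] q by auto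
  qed
  have "filterlim X at_top sequentially"
  proof (rule filterlim_at_top_mono)
    show "filterlim (\<lambda>p::nat. ln (ln 2 * real p / 2)) at_top sequentially" by real_asymp
  qed (use X in \<open>rule eventually_mono, simp\<close>)
  moreover from X have "\<forall>\<^sub>F p in sequentially.
      0 < X p \<and> X p \<le> f (X p) * ln (real p) \<and> Cp f C0 p \<le> 2 * C0 (X p)"
    by (rule eventually_mono) blast
  ultimately show ?thesis by (rule that)
qed

lemma max_0_comp_over_ln_tendsto_0:
  fixes X :: "nat \<Rightarrow> real"
  assumes X_top: "filterlim X at_top sequentially"
    and X: "\<forall>\<^sub>F p in sequentially. 0 < X p \<and> X p \<le> f (X p) * ln (real p)"
    and lim: "((\<lambda>\<xi>. f \<xi> * g \<xi> / \<xi>) \<longlongrightarrow> 0) at_top"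
  shows "((\<lambda>p. max 0 (g (X p)) / ln (real p)) \<longlongrightarrow> 0) sequentially"
proof (rule tendsto_sandwich[of "\<lambda>_. 0"])
  have "((\<lambda>p. max 0 (f (X p) * g (X p) / X p)) \<longlongrightarrow> max 0 0) sequentially"
    by (intro tendsto_max tendsto_const filterlim_compose[OF lim X_top])
  then show "((\<lambda>p. max 0 (f (X p) * g (X p) / X p)) \<longlongrightarrow> 0) sequentially" by simp
  show "\<forall>\<^sub>F p in sequentially. max 0 (g (X p)) / ln (real p) \<le> max 0 (f (X p) * g (X p) / X p)"
    using X eventually_gt_at_top[of "1::nat"]
  proof eventually_elim
    case (elim p)
    then have "0 < ln (real p)" by simp
    show ?case
    proof (cases "g (X p) \<le> 0")
      case False
      then have "g (X p) * X p \<le> g (X p) * (f (X p) * ln (real p))"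
        using elim by (intro mult_left_mono) auto
      then have "g (X p) / ln (real p) \<le> f (X p) * g (X p) / X p"
        using elim \<open>0 < ln (real p)\<close> by (simp add: field_simps)
      then show ?thesis using False by (simp add: le_max_iff_disj)
    qed simp
  qed
  show "\<forall>\<^sub>F p in sequentially. 0 \<le> max 0 (g (X p)) / ln (real p)"
    using eventually_gt_at_top[of "1::nat"] by eventually_elim simp
qed simp

lemma ln_Cp_over_ln_tendsto_0:
  fixes X :: "nat \<Rightarrow> real"
  assumes f_ge1: "\<forall>\<xi>>0. 1 \<le> f \<xi>" and f_mono: "mono_on {0<..} f"
    and C0_nonneg: "\<forall>\<xi>>0. 0 \<le> C0 \<xi>" and C0_mono: "mono_on {0<..} C0"
    and X_top: "filterlim X at_top sequentially"
    and X: "\<forall>\<^sub>F p in sequentially.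
              0 < X p \<and> X p \<le> f (X p) * ln (real p) \<and> Cp f C0 p \<le> 2 * C0 (X p)"
    and lim: "((\<lambda>\<xi>. f \<xi> * ln (C0 \<xi>) / \<xi>) \<longlongrightarrow> 0) at_top"
  shows "((\<lambda>p. ln (Cp f C0 p) / ln (real p)) \<longlongrightarrow> 0) sequentially"
proof (rule tendsto_sandwich)
  define c where "c = (INF \<xi>\<in>{0<..}. C0 \<xi>)"
  show "((\<lambda>p::nat. ln (2 * c) / ln (real p)) \<longlongrightarrow> 0) sequentially" by real_asymp
  show "\<forall>\<^sub>F p in sequentially. ln (2 * c) / ln (real p) \<le> ln (Cp f C0 p) / ln (real p)"
    using eventually_ge_at_top[of "6::nat"]
  proof eventually_elim
    case (elim p)
    then have "ln (2 * c) \<le> ln (Cp f C0 p)" "0 < ln (real p)"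
      unfolding c_def using assms by (auto intro: ln_Cp_ge)
    then show ?case by (intro divide_right_mono) auto
  qed
  have "((\<lambda>p. max 0 (ln (C0 (X p))) / ln (real p)) \<longlongrightarrow> 0) sequentially"
    using X_top X lim by (intro max_0_comp_over_ln_tendsto_0) (auto elim: eventually_mono)
  moreover have "((\<lambda>p::nat. ln 2 / ln (real p)) \<longlongrightarrow> 0) sequentially" by real_asymp
  ultimately show "((\<lambda>p. (ln 2 + max 0 (ln (C0 (X p)))) / ln (real p)) \<longlongrightarrow> 0) sequentially"
    by (simp add: add_divide_distrib tendsto_add_zero)
  show "\<forall>\<^sub>F p in sequentially.
          ln (Cp f C0 p) / ln (real p) \<le> (ln 2 + max 0 (ln (C0 (X p)))) / ln (real p)"
    using X eventually_ge_at_top[of "6::nat"]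
  proof eventually_elim
    case (elim p)
    have "0 \<le> Cp f C0 p" using Cp_ge[of p f 0 C0] elim f_ge1 C0_nonneg by fastforce
    have "ln (Cp f C0 p) \<le> ln 2 + max 0 (ln (C0 (X p)))"
    proof (cases "Cp f C0 p = 0")
      case False
      then have "0 < Cp f C0 p" "0 < C0 (X p)" using \<open>0 \<le> Cp f C0 p\<close> elim by auto
      then have "ln (Cp f C0 p) \<le> ln (2 * C0 (X p))" using elim by (intro ln_mono) auto
      also have "\<dots> = ln 2 + ln (C0 (X p))" using \<open>0 < C0 (X p)\<close> by (simp add: ln_mult)
      finally show ?thesis by simp
    qed simp
    then show ?case using elim by (intro divide_right_mono) auto
  qed
qed

lemma powr_le_if_le_mult_powr:
  fixes x c a \<beta> :: real
  assumes x: "0 < x" and le: "x \<le> c * x powr \<beta>" and \<beta>: "\<beta> < 1" and a: "0 \<le> a"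
  shows "x powr a \<le> c powr (a / (1 - \<beta>))"
proof -
  have "x powr (1 - \<beta>) = x / x powr \<beta>" using x by (simp add: powr_diff)
  also have "\<dots> \<le> c" using le x by (simp add: divide_le_eq)
  finally have "x powr (1 - \<beta>) \<le> c" .
  then have "(x powr (1 - \<beta>)) powr (a / (1 - \<beta>)) \<le> c powr (a / (1 - \<beta>))"
    using \<beta> a by (intro powr_mono2) auto
  then show ?thesis using \<beta> by (simp add: powr_powr)
qed

lemma Cp_le_polylog:
  fixes X :: "nat \<Rightarrow> real" and K' a K \<beta> :: real
  assumes X_top: "filterlim X at_top sequentially"
    and X: "\<forall>\<^sub>F p in sequentially.
              0 < X p \<and> X p \<le> f (X p) * ln (real p) \<and> Cp f C0 p \<le> 2 * C0 (X p)"
    and C0_bound: "0 \<le> K'" "0 \<le> a" "\<forall>\<^sub>F \<xi> in at_top. C0 \<xi> \<le> K' * \<xi> powr a"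
    and f_bound: "0 < K" "\<beta> < 1" "\<forall>\<^sub>F \<xi> in at_top. f \<xi> \<le> K * \<xi> powr \<beta>"
  shows "\<exists>A (n::nat). \<forall>\<^sub>F p in sequentially. Cp f C0 p \<le> A * ln (real p) ^ n"
proof (intro exI)
  define r where "r = a / (1 - \<beta>)"
  define n where "n = nat \<lceil>r\<rceil>"
  have "r \<le> real n" unfolding n_def by linarith
  show "\<forall>\<^sub>F p in sequentially. Cp f C0 p \<le> 2 * K' * K powr r * ln (real p) ^ n"
    using X eventually_compose_filterlim[OF C0_bound(3) X_top]
      eventually_compose_filterlim[OF f_bound(3) X_top] eventually_ge_at_top[of "3::nat"]
  proof eventually_elim
    case (elim p)
    have l: "1 \<le> ln (real p)" using elim(4) exp_le by (subst ln_ge_iff) auto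
    have "X p \<le> f (X p) * ln (real p)" using elim(1) by simp
    also have "\<dots> \<le> K * X p powr \<beta> * ln (real p)" using elim(3) l by (intro mult_right_mono) auto
    finally have "X p \<le> (K * ln (real p)) * X p powr \<beta>" by (simp add: mult_ac)
    then have "X p powr a \<le> (K * ln (real p)) powr r"
      unfolding r_def using elim(1) f_bound(2) C0_bound(2) by (intro powr_le_if_le_mult_powr) auto
    also have "\<dots> = K powr r * ln (real p) powr r" using f_bound(1) l by (simp add: powr_mult)
    also have "\<dots> \<le> K powr r * ln (real p) powr real n"
      using l \<open>r \<le> real n\<close> by (intro mult_left_mono powr_mono) auto
    also have "\<dots> = K powr r * ln (real p) ^ n" using l by (simp add: powr_realpow)
    finally have "K' * X p powr a \<le> K' * (K powr r * ln (real p) ^ n)"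
      using C0_bound(1) by (intro mult_left_mono)
    then show ?case using elim(1,2) by (simp add: mult_ac)
  qed
qed

theorem lemma2:
  fixes f C0 :: "real \<Rightarrow> real"
  assumes f_ge1: "\<forall>\<xi>>0. f \<xi> \<ge> 1"
    and f_mono: "mono_on {0<..} f"
    and C0_pos: "\<forall>\<xi>>0. C0 \<xi> > 0"
    and C0_mono: "mono_on {0<..} C0"
    and xi0: "\<forall>\<^sub>F p in sequentially.
                \<exists>\<xi>0>0. \<xi>0 = ln (- ln 2 / ln (1 - real p powr (- f \<xi>0)))"
  shows "(((\<lambda>\<xi>. f \<xi> * ln (C0 \<xi>) / \<xi>) \<longlongrightarrow> 0) at_top
            \<longrightarrow> ((\<lambda>p. ln (Cp f C0 p) / ln (real p)) \<longlongrightarrow> 0) sequentially)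
       \<and> (((\<exists>K' a. K' > 0 \<and> a > 0 \<and> (\<forall>\<^sub>F \<xi> in at_top. C0 \<xi> \<le> K' * \<xi> powr a))
            \<and> (\<exists>K \<beta>. K > 0 \<and> 0 \<le> \<beta> \<and> \<beta> < 1 \<and> (\<forall>\<^sub>F \<xi> in at_top. f \<xi> \<le> K * \<xi> powr \<beta>)))
          \<longrightarrow> (\<exists>A (n::nat). \<forall>\<^sub>F p in sequentially. Cp f C0 p \<le> A * ln (real p) ^ n))"
proof -
  have C0_nonneg: "\<forall>\<xi>>0. 0 \<le> C0 \<xi>" using C0_pos by (simp add: less_imp_le)
  obtain X where X_top: "filterlim X at_top sequentially"
    and X: "\<forall>\<^sub>F p in sequentially.
              0 < X p \<and> X p \<le> f (X p) * ln (real p) \<and> Cp f C0 p \<le> 2 * C0 (X p)"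
    using balancing_scale[OF f_ge1 C0_nonneg xi0] by blast
  show ?thesis
  proof (intro conjI impI)
    assume "((\<lambda>\<xi>. f \<xi> * ln (C0 \<xi>) / \<xi>) \<longlongrightarrow> 0) at_top"
    then show "((\<lambda>p. ln (Cp f C0 p) / ln (real p)) \<longlongrightarrow> 0) sequentially"
      by (rule ln_Cp_over_ln_tendsto_0[OF f_ge1 f_mono C0_nonneg C0_mono X_top X])
  next
    assume "(\<exists>K' a. K' > 0 \<and> a > 0 \<and> (\<forall>\<^sub>F \<xi> in at_top. C0 \<xi> \<le> K' * \<xi> powr a))
      \<and> (\<exists>K \<beta>. K > 0 \<and> 0 \<le> \<beta> \<and> \<beta> < 1 \<and> (\<forall>\<^sub>F \<xi> in at_top. f \<xi> \<le> K * \<xi> powr \<beta>))"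
    then obtain K' a K \<beta> where "0 < K'" "0 < a" "\<forall>\<^sub>F \<xi> in at_top. C0 \<xi> \<le> K' * \<xi> powr a"
      and "0 < K" "\<beta> < 1" "\<forall>\<^sub>F \<xi> in at_top. f \<xi> \<le> K * \<xi> powr \<beta>"
      by blast
    then show "\<exists>A (n::nat). \<forall>\<^sub>F p in sequentially. Cp f C0 p \<le> A * ln (real p) ^ n"
      by (intro Cp_le_polylog[OF X_top X]) auto
  qed
qed

end
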